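(* Let $\hat{A}\in\{0,1\}^{n\times n}$ be symmetric with exactly $m$ non-zero entries and no zero row, and let $d_i=\sum_j\hat{A}_{ij}$. Let $V=\{1,\dots,n\}$ be partitioned into $k$ disjoint groups $B_1,\dots,B_k$, and let $\overline{F}\in\mathbb{R}^{n\times n}$ be a $k\times k$ block matrix with respect to this partition: there is a symmetric $C\in\mathbb{R}^{k\times k}$ with $\overline{F}_{ab}=C_{pq}$ whenever $a\in B_p$, $b\in B_q$. Set $c=\sum_{a,b}\overline{F}_{ab}\hat{A}_{ab}$. Consider the Lagrange dual function of the maximum entropy model with one constraint on each node degree and one constraint given by $\overline{F}$: $$L(\lambda_1,\dots,\lambda_n,\mu)=\sum_{a=1}^n\sum_{b=1}^n\log\bigl(1+\exp(\lambda_a+\mu\overline{F}_{ab})\bigr)-\sum_{a=1}^n d_a\lambda_a-c\,\mu ,$$ a convex function on $\mathbb{R}^{n+1}$. Let $W\subseteq\mathbb{R}^{n+1}$ be the linear subspace of vectors $(\lambda,\mu)$ with $\lambda_a=\lambda_b$ whenever $a,b$ lie in the same group $B_p$ and $d_a=d_b$. Then $W$ has dimension at most $\sqrt{2km}+1$, the restriction of $L$ to $W$ is an unconstrained convex function of at most $\sqrt{2km}+1$ free variables, $\inf_{W}L=\inf_{\mathbb{R}^{n+1}}L$, and every minimizer of $L$ on $W$ is a global minimizer of $L$. In particular, the maximum entropy model can be solved by optimizing an unconstrained convex problem with at most $\sqrt{2km}+1$ variables.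
   Context: Maximum entropy (MaxEnt) model: given feature matrices $F_l=[f^l_{ij}]\in\mathbb{R}^{n\times n}$, $l=1,\dots,M$, and an observed adjacency matrix $\hat{A}$, one seeks the distribution $P$ over $\{0,1\}^{n\times n}$ maximizing the entropy $-\mathbb{E}_P[\log P(A)]$ subject to $\mathbb{E}_P[\sum_{i,j}f^l_{ij}A_{ij}]=c_l:=\sum_{i,j}f^l_{ij}\hat{A}_{ij}$ for all $l$. Its solution is obtained from minimizers $(\lambda_l)$ of the Lagrange dual $\sum_{i,j}\log(1+\exp(\sum_l f^l_{ij}\lambda_l))-\sum_l c_l\lambda_l$. A degree constraint for node $a$ corresponds to the feature matrix with ones in row $a$ and zeros elsewhere (multiplier $\lambda_a$), and the global constraint corresponds to $\overline{F}$ (multiplier $\mu$), which yields the function $L$ above. *)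

theory Defs
  imports "HOL-Analysis.Analysis"
begin

text \<open>Nodes are the elements of a finite type 'n (so n = CARD('n)); the space R^(n+1)
  of dual variables (lambda_1..lambda_n, mu) is rendered as (real^'n) \<times> real.\<close>

definition deg :: "('n::finite \<Rightarrow> 'n \<Rightarrow> real) \<Rightarrow> 'n \<Rightarrow> real" where
  "deg A i = (\<Sum>j\<in>UNIV. A i j)"

definition num_edges :: "('n::finite \<Rightarrow> 'n \<Rightarrow> real) \<Rightarrow> nat" where
  "num_edges A = card {(i, j). A i j \<noteq> 0}"

definition glob_c :: "('n::finite \<Rightarrow> 'n \<Rightarrow> real) \<Rightarrow> ('n \<Rightarrow> 'n \<Rightarrow> real) \<Rightarrow> real" where
  "glob_c F A = (\<Sum>a\<in>UNIV. \<Sum>b\<in>UNIV. F a b * A a b)"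

definition maxent_L ::
  "('n::finite \<Rightarrow> 'n \<Rightarrow> real) \<Rightarrow> ('n \<Rightarrow> 'n \<Rightarrow> real) \<Rightarrow> (real^'n) \<times> real \<Rightarrow> real" where
  "maxent_L A F x =
     (\<Sum>a\<in>UNIV. \<Sum>b\<in>UNIV. ln (1 + exp (fst x $ a + snd x * F a b)))
     - (\<Sum>a\<in>UNIV. deg A a * fst x $ a) - glob_c F A * snd x"

definition reduced_space ::
  "('n::finite \<Rightarrow> 'n \<Rightarrow> real) \<Rightarrow> ('n \<Rightarrow> nat) \<Rightarrow> ((real^'n) \<times> real) set" where
  "reduced_space A g = {x. \<forall>a b. g a = g b \<and> deg A a = deg A b \<longrightarrow> fst x $ a = fst x $ b}"

end

theory Submission
  imports Defs
begin

text \<open>For fixed \<mu> the dual function splits as a sum over the nodes a of convex functions of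
  the single variable \<lambda>_a, and the function attached to a depends only on the class of a
  (its group and its degree), because the row of F indexed by a depends only on the group of a.
  Jensen's inequality inside each class therefore shows that replacing \<lambda> by its class averages
  does not increase L. The averaged point lies in W, so W carries the infimum and every
  minimizer over W is global.

  W is spanned by the indicator vectors of the classes together with the \<mu>-axis, so its dimension
  is at most the number of classes plus one. The classes inside one group have distinct positive
  degrees, hence a group with s classes has degree sum at least s(s+1)/2; summing over the
  k groups and applying Cauchy-Schwarz bounds the square of the number of classes by 2km.\<close>

lemma convex_on_sum_fun:
  assumes "finite I" "convex S" "\<And>i. i \<in> I \<Longrightarrow> convex_on S (f i)"
  shows "convex_on S (\<lambda>x. \<Sum>i\<in>I. f i x)"
  using assms by (induction I rule: finite_induct) (auto simp: convex_on_const)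

lemma convex_on_linear:
  fixes h :: "'a::real_vector \<Rightarrow> real"
  assumes "linear h" "convex S"
  shows "convex_on S h"
  using assms by (auto intro!: convex_onI simp: linear_add linear_scale)

lemma convex_on_compose_affine:
  assumes f: "convex_on UNIV f" and h: "linear h"
  shows "convex_on UNIV (\<lambda>x. f (h x + c))"
  unfolding convex_on_def
proof (intro conjI ballI allI impI)
  fix x y and u v :: real
  assume uv: "0 \<le> u" "0 \<le> v" "u + v = 1"
  then have "c = u *\<^sub>R c + v *\<^sub>R c"
    by (simp flip: scaleR_add_left)
  then have "h (u *\<^sub>R x + v *\<^sub>R y) + c = u *\<^sub>R (h x + c) + v *\<^sub>R (h y + c)"
    using h by (simp add: linear_add linear_scale algebra_simps)
  then show "f (h (u *\<^sub>R x + v *\<^sub>R y) + c) \<le> u * f (h x + c) + v * f (h y + c)"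
    using f uv by (simp add: convex_on_def)
qed simp

definition softplus :: "real \<Rightarrow> real" where
  "softplus t = ln (1 + exp t)"

lemma convex_on_softplus: "convex_on UNIV softplus"
proof (rule convex_on_realI[where f' = "\<lambda>t. exp t / (1 + exp t)"])
  fix t :: real
  show "(softplus has_real_derivative exp t / (1 + exp t)) (at t)"
    unfolding softplus_def by (rule derivative_eq_intros refl | simp add: add_pos_pos)+
next
  fix s t :: real
  assume "s \<le> t"
  then show "exp s / (1 + exp s) \<le> exp t / (1 + exp t)"
    by (simp add: divide_simps add_pos_pos algebra_simps)
qed simp

lemma softplus_ge: "t \<le> softplus t" "0 \<le> softplus t"
proof -
  have "ln (exp t) \<le> ln (1 + exp t)"
    by (subst ln_le_cancel_iff) (auto intro: add_pos_pos)
  then show "t \<le> softplus t" by (simp add: softplus_def)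
  show "0 \<le> softplus t" by (simp add: softplus_def)
qed

lemma maxent_L_convex:
  fixes A F :: "'n::finite \<Rightarrow> 'n \<Rightarrow> real"
  shows "convex_on UNIV (maxent_L A F)"
proof -
  let ?lin = "\<lambda>a b (x :: (real^'n) \<times> real). fst x $ a + snd x * F a b"
  have "linear (?lin a b)" for a b
    by (auto intro!: linearI simp: algebra_simps)
  then have softplus_lin: "convex_on UNIV (\<lambda>x. softplus (?lin a b x))" for a b
    using convex_on_compose_affine[OF convex_on_softplus, of "?lin a b" 0] by simp
  have "linear (\<lambda>x :: (real^'n) \<times> real. - (\<Sum>a\<in>UNIV. deg A a * fst x $ a) - glob_c F A * snd x)"
    by (auto intro!: linearI simp: algebra_simps sum.distrib sum_distrib_left)
  then have "convex_on UNIV (\<lambda>x :: (real^'n) \<times> real.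
      (\<Sum>a\<in>UNIV. \<Sum>b\<in>UNIV. softplus (?lin a b x))
      + (- (\<Sum>a\<in>UNIV. deg A a * fst x $ a) - glob_c F A * snd x))"
    by (intro convex_on_add convex_on_sum_fun softplus_lin convex_on_linear) auto
  moreover have "maxent_L A F = (\<lambda>x. (\<Sum>a\<in>UNIV. \<Sum>b\<in>UNIV. softplus (?lin a b x))
      + (- (\<Sum>a\<in>UNIV. deg A a * fst x $ a) - glob_c F A * snd x))"
    by (simp add: maxent_L_def softplus_def fun_eq_iff)
  ultimately show ?thesis
    by simp
qed

definition fiber_avg :: "('n::finite \<Rightarrow> 'k) \<Rightarrow> real^'n \<Rightarrow> real^'n" where
  "fiber_avg \<kappa> l = (\<chi> a. (\<Sum>b | \<kappa> b = \<kappa> a. l $ b) / card {b. \<kappa> b = \<kappa> a})"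

lemma fiber_avg_eq: "\<kappa> a = \<kappa> b \<Longrightarrow> fiber_avg \<kappa> l $ a = fiber_avg \<kappa> l $ b"
  unfolding fiber_avg_def by simp

lemma sum_fiber_averages:
  fixes \<kappa> :: "'n::finite \<Rightarrow> 'k" and f :: "'n \<Rightarrow> real"
  shows "(\<Sum>a\<in>UNIV. (\<Sum>b | \<kappa> b = \<kappa> a. f b) / card {b. \<kappa> b = \<kappa> a}) = (\<Sum>b\<in>UNIV. f b)"
proof -
  have fiber: "(\<Sum>a | \<kappa> a = c. (\<Sum>b | \<kappa> b = \<kappa> a. f b) / card {b. \<kappa> b = \<kappa> a})
      = (\<Sum>b | \<kappa> b = c. f b)" for c
  proof -
    have "(\<Sum>a | \<kappa> a = c. (\<Sum>b | \<kappa> b = \<kappa> a. f b) / card {b. \<kappa> b = \<kappa> a})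
        = (\<Sum>a | \<kappa> a = c. (\<Sum>b | \<kappa> b = c. f b) / card {b. \<kappa> b = c})"
      by (rule sum.cong) auto
    then show ?thesis
      by (cases "{b. \<kappa> b = c} = {}") simp_all
  qed
  have "(\<Sum>a\<in>UNIV. (\<Sum>b | \<kappa> b = \<kappa> a. f b) / card {b. \<kappa> b = \<kappa> a})
      = (\<Sum>c\<in>range \<kappa>. \<Sum>a | \<kappa> a = c. (\<Sum>b | \<kappa> b = \<kappa> a. f b) / card {b. \<kappa> b = \<kappa> a})"
    by (simp add: sum.image_gen[of UNIV _ \<kappa>])
  also have "\<dots> = (\<Sum>c\<in>range \<kappa>. \<Sum>b | \<kappa> b = c. f b)"
    by (simp only: fiber)
  also have "\<dots> = (\<Sum>b\<in>UNIV. f b)"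
    by (simp add: sum.image_gen[of UNIV f \<kappa>])
  finally show ?thesis .
qed

lemma sum_fiber_avg_le:
  fixes \<kappa> :: "'n::finite \<Rightarrow> 'k" and H :: "'n \<Rightarrow> real \<Rightarrow> real"
  assumes convex: "\<And>a. convex_on UNIV (H a)"
    and fiberwise: "\<And>a b. \<kappa> a = \<kappa> b \<Longrightarrow> H a = H b"
  shows "(\<Sum>a\<in>UNIV. H a (fiber_avg \<kappa> l $ a)) \<le> (\<Sum>a\<in>UNIV. H a (l $ a))"
proof -
  have jensen: "H a (fiber_avg \<kappa> l $ a)
      \<le> (\<Sum>b | \<kappa> b = \<kappa> a. H b (l $ b)) / card {b. \<kappa> b = \<kappa> a}" for a
  proof -
    let ?E = "{b. \<kappa> b = \<kappa> a}"
    have "?E \<noteq> {}" by auto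
    then have "H a (\<Sum>b\<in>?E. (1 / card ?E) *\<^sub>R l $ b) \<le> (\<Sum>b\<in>?E. (1 / card ?E) * H a (l $ b))"
      by (intro convex_on_sum[OF _ _ convex]) auto
    moreover have "(\<Sum>b\<in>?E. (1 / card ?E) * H a (l $ b)) = (\<Sum>b\<in>?E. H b (l $ b) / card ?E)"
    proof (rule sum.cong)
      fix b
      assume "b \<in> ?E"
      then have "H b = H a"
        by (intro fiberwise) simp
      then show "(1 / card ?E) * H a (l $ b) = H b (l $ b) / card ?E"
        by simp
    qed simp
    ultimately show ?thesis
      by (simp add: fiber_avg_def sum_divide_distrib)
  qed
  have "(\<Sum>a\<in>UNIV. H a (fiber_avg \<kappa> l $ a))
      \<le> (\<Sum>a\<in>UNIV. (\<Sum>b | \<kappa> b = \<kappa> a. H b (l $ b)) / card {b. \<kappa> b = \<kappa> a})"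
    by (intro sum_mono jensen)
  then show ?thesis
    by (simp only: sum_fiber_averages)
qed

definition degree_class :: "('n::finite \<Rightarrow> 'n \<Rightarrow> real) \<Rightarrow> ('n \<Rightarrow> nat) \<Rightarrow> 'n \<Rightarrow> nat \<times> real" where
  "degree_class A g a = (g a, deg A a)"

lemma reduced_space_eq:
  "reduced_space A g = {x. \<forall>a b. degree_class A g a = degree_class A g b \<longrightarrow> fst x $ a = fst x $ b}"
  by (simp add: reduced_space_def degree_class_def)

lemma fiber_avg_mem_reduced_space: "(fiber_avg (degree_class A g) l, \<mu>) \<in> reduced_space A g"
  unfolding reduced_space_eq mem_Collect_eq fst_conv by (blast intro: fiber_avg_eq)

lemma maxent_L_fiber_avg_le:
  fixes A F :: "'n::finite \<Rightarrow> 'n \<Rightarrow> real"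
  assumes F_block: "\<forall>a b. F a b = C (g a) (g b)"
  shows "maxent_L A F (fiber_avg (degree_class A g) l, \<mu>) \<le> maxent_L A F (l, \<mu>)"
proof -
  define H where "H a t = (\<Sum>b\<in>UNIV. softplus (t + \<mu> * F a b)) - deg A a * t" for a t
  have split: "maxent_L A F (z, \<mu>) = (\<Sum>a\<in>UNIV. H a (z $ a)) - glob_c F A * \<mu>" for z
    by (simp add: maxent_L_def H_def softplus_def sum_subtractf)
  have "convex_on UNIV (H a)" for a
  proof -
    have "linear (\<lambda>t :: real. - (deg A a * t))"
      by (auto intro!: linearI simp: algebra_simps)
    then show ?thesis
      unfolding H_def diff_conv_add_uminus
      by (intro convex_on_add convex_on_sum_fun convex_on_compose_affine convex_on_softplus
          convex_on_linear) (auto intro: linearI)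
  qed
  moreover have "H a = H b" if "degree_class A g a = degree_class A g b" for a b
  proof -
    have "g a = g b" "deg A a = deg A b"
      using that by (simp_all add: degree_class_def)
    then show ?thesis
      unfolding H_def using F_block by simp
  qed
  ultimately have "(\<Sum>a\<in>UNIV. H a (fiber_avg (degree_class A g) l $ a)) \<le> (\<Sum>a\<in>UNIV. H a (l $ a))"
    by (rule sum_fiber_avg_le)
  then show ?thesis
    by (simp only: split)
qed

lemma maxent_L_dominated_by_reduced_space:
  fixes A F :: "'n::finite \<Rightarrow> 'n \<Rightarrow> real"
  assumes "\<forall>a b. F a b = C (g a) (g b)"
  shows "\<exists>x\<in>reduced_space A g. maxent_L A F x \<le> maxent_L A F y"
proof -
  obtain l \<mu> where "y = (l, \<mu>)"
    by (cases y)
  then show ?thesis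
    using fiber_avg_mem_reduced_space maxent_L_fiber_avg_le[OF assms] by blast
qed

lemma subspace_reduced_space: "subspace (reduced_space A g)"
  unfolding subspace_def
proof (intro conjI ballI allI)
  show "0 \<in> reduced_space A g"
    by (simp add: reduced_space_def)
next
  fix x y
  assume "x \<in> reduced_space A g" "y \<in> reduced_space A g"
  then show "x + y \<in> reduced_space A g"
    unfolding reduced_space_def mem_Collect_eq by (metis fst_add vector_add_component)
next
  fix c :: real and x
  assume "x \<in> reduced_space A g"
  then show "c *\<^sub>R x \<in> reduced_space A g"
    unfolding reduced_space_def mem_Collect_eq by (metis fst_scaleR vector_scaleR_component)
qed

lemma dim_reduced_space_le:
  fixes A :: "'n::finite \<Rightarrow> 'n \<Rightarrow> real"
  shows "dim (reduced_space A g) \<le> card (range (degree_class A g)) + 1"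
proof -
  let ?\<kappa> = "degree_class A g"
  define e where "e c = ((\<chi> a. if ?\<kappa> a = c then 1 else 0) :: real^'n, 0 :: real)" for c
  define B where "B = insert (0, 1) (e ` range ?\<kappa>)"
  have "reduced_space A g \<subseteq> span B"
  proof
    fix x
    assume "x \<in> reduced_space A g"
    then have on_fibers: "fst x $ a = fst x $ b" if "?\<kappa> a = ?\<kappa> b" for a b
      using that unfolding reduced_space_eq by blast
    define v where "v c = fst x $ inv ?\<kappa> c" for c
    have "?\<kappa> (inv ?\<kappa> (?\<kappa> a)) = ?\<kappa> a" for a
      by (rule f_inv_into_f) simp
    then have v: "fst x $ a = v (?\<kappa> a)" for a
      unfolding v_def by (rule on_fibers[symmetric])
    have coord: "(\<Sum>c\<in>range ?\<kappa>. v c * (if ?\<kappa> a = c then 1 else 0)) = v (?\<kappa> a)" for a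
    proof -
      have "(\<Sum>c\<in>range ?\<kappa>. v c * (if ?\<kappa> a = c then 1 else 0))
          = (\<Sum>c\<in>range ?\<kappa>. if ?\<kappa> a = c then v c else 0)"
        by (rule sum.cong) simp_all
      then show ?thesis
        by simp
    qed
    have "x = (\<Sum>c\<in>range ?\<kappa>. v c *\<^sub>R e c) + snd x *\<^sub>R (0, 1)"
    proof (rule prod_eqI)
      show "fst x = fst ((\<Sum>c\<in>range ?\<kappa>. v c *\<^sub>R e c) + snd x *\<^sub>R (0, 1))"
        by (simp add: fst_sum e_def vec_eq_iff v coord)
      show "snd x = snd ((\<Sum>c\<in>range ?\<kappa>. v c *\<^sub>R e c) + snd x *\<^sub>R (0, 1))"
        by (simp add: snd_sum e_def)
    qed
    also have "\<dots> \<in> span B"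
      by (intro span_add span_sum span_scale span_base) (auto simp: B_def)
    finally show "x \<in> span B" .
  qed
  then have "dim (reduced_space A g) \<le> card B"
    by (rule dim_le_card) (simp add: B_def)
  also have "\<dots> \<le> card (range ?\<kappa>) + 1"
    unfolding B_def using card_image_le[of "range ?\<kappa>" e] by (simp add: card_insert_if)
  finally show ?thesis .
qed

lemma card_mult_Suc_card_le_twice_sum:
  fixes S :: "nat set"
  assumes "finite S" "0 \<notin> S"
  shows "card S * (card S + 1) \<le> 2 * \<Sum>S"
  using assms
proof (induction "card S" arbitrary: S)
  case (Suc n)
  define M where "M = Max S"
  have "S \<noteq> {}"
    using Suc.hyps(2) by auto
  then have M: "M \<in> S" "S \<subseteq> {1..M}"
    using Suc.prems by (auto simp: M_def Suc_le_eq gr0I)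
  then have "card S \<le> M"
    using card_mono[of "{1..M}" S] by simp
  moreover have "card (S - {M}) = n"
    using Suc.hyps(2) Suc.prems(1) M(1) by simp
  then have "n * (n + 1) \<le> 2 * \<Sum>(S - {M})"
    using Suc.hyps(1)[of "S - {M}"] Suc.prems by auto
  moreover have "\<Sum>S = M + \<Sum>(S - {M})"
    using sum.remove[OF Suc.prems(1) M(1), of id] by simp
  ultimately show ?case
    using Suc.hyps(2)[symmetric] by (simp add: algebra_simps)
qed simp

lemma card_le_sqrt_sum_snd:
  fixes P :: "(nat \<times> nat) set"
  assumes "finite P" "P \<subseteq> {..<k} \<times> {1..}"
  shows "real (card P) \<le> sqrt (2 * real k * real (\<Sum>c\<in>P. snd c))"
proof -
  define S where "S p = {d. (p, d) \<in> P}" for p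
  have P: "P = Sigma {..<k} S"
    using assms(2) by (auto simp: S_def)
  have "S p \<subseteq> snd ` P" for p
    by (force simp: S_def)
  then have fin: "finite (S p)" for p
    using assms(1) by (meson finite_imageI finite_subset)
  have "(\<Sum>p<k. real (card (S p)) ^ 2) \<le> (\<Sum>p<k. 2 * real (\<Sum>(S p)))"
  proof (rule sum_mono)
    fix p
    have "0 \<notin> S p"
      using assms(2) by (auto simp: S_def)
    then have "card (S p) * card (S p) \<le> 2 * \<Sum>(S p)"
      using card_mult_Suc_card_le_twice_sum[OF fin] by (meson le_add1 le_trans mult_le_mono2)
    then have "real (card (S p) * card (S p)) \<le> real (2 * \<Sum>(S p))"
      by (simp only: of_nat_le_iff)
    then show "real (card (S p)) ^ 2 \<le> 2 * real (\<Sum>(S p))"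
      by (simp add: power2_eq_square)
  qed
  also have "\<dots> = 2 * real (\<Sum>c\<in>P. snd c)"
    by (simp add: P sum.Sigma fin split_def sum_distrib_left)
  finally have squares: "(\<Sum>p<k. real (card (S p)) ^ 2) \<le> 2 * real (\<Sum>c\<in>P. snd c)" .
  have "real (card P) ^ 2 = (\<Sum>p<k. real (card (S p)) * 1) ^ 2"
    by (simp add: P card_SigmaI fin)
  also have "\<dots> \<le> (\<Sum>p<k. real (card (S p)) ^ 2) * real k"
    using Cauchy_Schwarz_ineq_sum[of "\<lambda>p. real (card (S p))" "\<lambda>_. 1" "{..<k}"] by simp
  also have "\<dots> \<le> 2 * real k * real (\<Sum>c\<in>P. snd c)"
    using mult_right_mono[OF squares, of "real k"] by (simp add: algebra_simps)
  finally show ?thesis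
    by (rule real_le_rsqrt)
qed

lemma deg_eq_card_support:
  assumes "\<forall>i j. A i j \<in> {0, 1}"
  shows "deg A a = real (card {j. A a j \<noteq> 0})"
proof -
  have "deg A a = (\<Sum>j\<in>UNIV. if A a j \<noteq> 0 then 1 else 0)"
    unfolding deg_def by (rule sum.cong) (use assms in auto)
  then show ?thesis
    by (simp add: sum.If_cases)
qed

lemma num_edges_eq_sum_card_support:
  "num_edges A = (\<Sum>a\<in>UNIV. card {j. A a j \<noteq> 0})"
proof -
  have "{(i, j). A i j \<noteq> 0} = Sigma UNIV (\<lambda>i. {j. A i j \<noteq> 0})"
    by auto
  then show ?thesis
    by (simp add: num_edges_def card_SigmaI)
qed

lemma card_degree_classes_le:
  fixes A :: "'n::finite \<Rightarrow> 'n \<Rightarrow> real"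
  assumes A01: "\<forall>i j. A i j \<in> {0, 1}"
    and Arow: "\<forall>i. \<exists>j. A i j \<noteq> 0"
    and g_range: "\<forall>a. g a < k"
  shows "real (card (range (degree_class A g))) \<le> sqrt (2 * real k * real (num_edges A))"
proof -
  define dn where "dn a = card {j. A a j \<noteq> 0}" for a
  define cl where "cl a = (g a, dn a)" for a
  have "range (degree_class A g) = (\<lambda>(p, d). (p, real d)) ` range cl"
    by (auto simp: degree_class_def cl_def dn_def deg_eq_card_support[OF A01])
  moreover have "inj_on (\<lambda>(p, d). (p, real d)) (range cl)"
    by (auto simp: inj_on_def cl_def)
  ultimately have "real (card (range (degree_class A g))) = real (card (range cl))"
    by (simp add: card_image)
  also have "\<dots> \<le> sqrt (2 * real k * real (\<Sum>c\<in>range cl. snd c))"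
    using g_range Arow
    by (intro card_le_sqrt_sum_snd) (auto simp: cl_def dn_def Suc_le_eq card_gt_0_iff)
  also have "\<dots> \<le> sqrt (2 * real k * real (num_edges A))"
  proof -
    have "(\<Sum>c\<in>range cl. snd c) \<le> num_edges A"
      using sum_image_le[of UNIV snd cl] by (simp add: num_edges_eq_sum_card_support cl_def dn_def o_def)
    then show ?thesis
      by (intro real_sqrt_le_mono mult_left_mono) (simp_all only: of_nat_le_iff of_nat_0_le_iff)
  qed
  finally show ?thesis .
qed

lemma maxent_L_nonneg:
  fixes A F :: "'n::finite \<Rightarrow> 'n \<Rightarrow> real"
  assumes A01: "\<forall>i j. A i j \<in> {0, 1}"
  shows "0 \<le> maxent_L A F x"
proof -
  let ?t = "\<lambda>a b. fst x $ a + snd x * F a b"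
  have "(\<Sum>a\<in>UNIV. deg A a * fst x $ a) + glob_c F A * snd x = (\<Sum>a\<in>UNIV. \<Sum>b\<in>UNIV. ?t a b * A a b)"
    by (simp add: deg_def glob_c_def algebra_simps sum.distrib sum_distrib_left sum_distrib_right)
  also have "\<dots> \<le> (\<Sum>a\<in>UNIV. \<Sum>b\<in>UNIV. softplus (?t a b))"
  proof (intro sum_mono)
    fix a b
    show "?t a b * A a b \<le> softplus (?t a b)"
    proof -
      have "A a b = 0 \<or> A a b = 1"
        using A01 by simp
      then show ?thesis
        using softplus_ge[of "?t a b"] by auto
    qed
  qed
  finally show ?thesis
    by (simp add: maxent_L_def flip: softplus_def)
qed

lemma INF_eq_INF_UNIV_if_dominated:
  fixes f :: "'a \<Rightarrow> 'b::conditionally_complete_lattice"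
  assumes "W \<noteq> {}" "bdd_below (range f)" "\<And>y. \<exists>x\<in>W. f x \<le> f y"
  shows "(INF x\<in>W. f x) = (INF x. f x)"
proof (rule antisym)
  have "bdd_below (f ` W)"
    using assms(2) by (meson bdd_below_mono image_mono subset_UNIV)
  then show "(INF x\<in>W. f x) \<le> (INF x. f x)"
  proof (intro cINF_greatest)
    fix y
    obtain x where "x \<in> W" "f x \<le> f y"
      using assms(3) by blast
    then have "(INF x\<in>W. f x) \<le> f x"
      using \<open>bdd_below (f ` W)\<close> by (intro cINF_lower)
    then show "(INF x\<in>W. f x) \<le> f y"
      using \<open>f x \<le> f y\<close> by (rule order_trans)
  qed simp
  show "(INF x. f x) \<le> (INF x\<in>W. f x)"
    using assms(1,2) by (rule cINF_superset_mono) simp_all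
qed

theorem theorem1:
  fixes A :: "'n::finite \<Rightarrow> 'n \<Rightarrow> real"
    and g :: "'n \<Rightarrow> nat" and k :: nat
    and F :: "'n \<Rightarrow> 'n \<Rightarrow> real"
  assumes A01: "\<forall>i j. A i j \<in> {0, 1}"
    and Asym: "\<forall>i j. A i j = A j i"
    and Arow: "\<forall>i. \<exists>j. A i j \<noteq> 0"
    and g_range: "\<forall>a. g a < k"
    and g_nonempty: "\<forall>p<k. \<exists>a. g a = p"
    and F_block: "\<exists>C :: nat \<Rightarrow> nat \<Rightarrow> real.
                    (\<forall>p<k. \<forall>q<k. C p q = C q p) \<and> (\<forall>a b. F a b = C (g a) (g b))"
  shows "subspace (reduced_space A g)
    \<and> real (dim (reduced_space A g)) \<le> sqrt (2 * real k * real (num_edges A)) + 1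
    \<and> convex_on UNIV (maxent_L A F)
    \<and> convex_on (reduced_space A g) (maxent_L A F)
    \<and> (INF x\<in>reduced_space A g. maxent_L A F x) = (INF x. maxent_L A F x)
    \<and> (\<forall>x\<in>reduced_space A g. (\<forall>y\<in>reduced_space A g. maxent_L A F x \<le> maxent_L A F y)
         \<longrightarrow> (\<forall>y. maxent_L A F x \<le> maxent_L A F y))"
proof -
  let ?W = "reduced_space A g" and ?L = "maxent_L A F"
  obtain C where "\<forall>a b. F a b = C (g a) (g b)"
    using F_block by blast
  then have dominated: "\<exists>x\<in>?W. ?L x \<le> ?L y" for y
    by (rule maxent_L_dominated_by_reduced_space)
  have dim: "real (dim ?W) \<le> sqrt (2 * real k * real (num_edges A)) + 1"
    using dim_reduced_space_le[of A g] card_degree_classes_le[OF A01 Arow g_range] by linarith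
  have convex_W: "convex_on ?W ?L"
    by (rule convex_on_subset[OF maxent_L_convex])
      (simp_all add: subspace_imp_convex subspace_reduced_space)
  have "0 \<in> ?W"
    using subspace_reduced_space by (rule subspace_0)
  then have INF: "(INF x\<in>?W. ?L x) = (INF x. ?L x)"
    using maxent_L_nonneg[OF A01] dominated
    by (intro INF_eq_INF_UNIV_if_dominated) (auto simp: bdd_below_def)
  have "\<forall>x\<in>?W. (\<forall>y\<in>?W. ?L x \<le> ?L y) \<longrightarrow> (\<forall>y. ?L x \<le> ?L y)"
    using dominated by (meson order_trans)
  then show ?thesis
    using subspace_reduced_space dim maxent_L_convex convex_W INF by blast
qed

end
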